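(* Let $m\ge0$, $n\ge1$, and let $\lambda$ be a partition with $\lambda_1<n$. Then $$\Big\{SP_\lambda(x,y_1,\dots,y_n)\,x^{\rho_m}y^{\rho_n}\Big\}=\Big\{SP_\lambda(x,y_1,\dots,y_{n-1})\,x^{\rho_m}y^{\rho_n}\Big\}.$$ Here $\{\cdot\}$ is the alternation over $S_m\times S_n$ acting on $x_1,\dots,x_m,y_1,\dots,y_n$.
   Context: For $f(x,y)$ with $x=(x_1,\dots,x_m)$ and $y=(y_1,\dots,y_n)$, set $\{f\}=\sum_{w\in S_m\times S_n}\varepsilon(w)w(f)$. Here $S_m$ permutes the $x_i$, $S_n$ permutes the $y_j$, and $\varepsilon$ is the sign. Set $x^{\rho_m}=x_1^{m-1}\cdots x_m^0$ and $y^{\rho_n}=y_1^{n-1}\cdots y_n^0$. For a partition $\mu$ and any lists of variables $x,y$, $SP_\mu(x,y)=\det(h_{\mu_r-r+s}(x,y))_{r,s=1}^{l(\mu)}$, with $SP_\emptyset=1$. The $h_a(x,y)$ are given by $\prod_j(1-ty_j)/\prod_i(1-tx_i)=\sum_{a\ge0}h_a(x,y)t^a$, and $h_a=0$ for $a<0$. *)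

theory Defs
  imports "Jordan_Normal_Form.Determinant" "HOL-Computational_Algebra.Formal_Power_Series"
begin

(* Variables are functions nat => 'a; a list x_1..x_m is x 0, ..., x (m-1). *)

(* formal geometric series 1/(1 - c t) = sum_k c^k t^k *)
definition geom_fps :: "'a::comm_ring_1 \<Rightarrow> 'a fps" where
  "geom_fps c = Abs_fps (\<lambda>k. c ^ k)"

definition h_xy :: "nat \<Rightarrow> (nat \<Rightarrow> 'a::comm_ring_1) \<Rightarrow> nat \<Rightarrow> (nat \<Rightarrow> 'a) \<Rightarrow> int \<Rightarrow> 'a" where
  "h_xy m x n y a =
     (if a < 0 then 0
      else fps_nth ((\<Prod>i<m. geom_fps (x i)) * (\<Prod>j<n. 1 - fps_const (y j) * fps_X)) (nat a))"

definition is_partition :: "nat list \<Rightarrow> bool" where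
  "is_partition lam \<longleftrightarrow> sorted_wrt (\<ge>) lam \<and> 0 \<notin> set lam"

(* SP_lam(x,y) = det (h_{lam_r - r + s})_{r,s=1..l(lam)}, written 0-indexed *)
definition SP :: "nat list \<Rightarrow> nat \<Rightarrow> (nat \<Rightarrow> 'a::comm_ring_1) \<Rightarrow> nat \<Rightarrow> (nat \<Rightarrow> 'a) \<Rightarrow> 'a" where
  "SP lam m x n y =
     det (mat (length lam) (length lam)
       (\<lambda>(r, s). h_xy m x n y (int (lam ! r) - int r + int s)))"

definition rho_mon :: "nat \<Rightarrow> (nat \<Rightarrow> 'a::comm_ring_1) \<Rightarrow> 'a" where
  "rho_mon m x = (\<Prod>i<m. x i ^ (m - 1 - i))"

definition alt :: "nat \<Rightarrow> nat \<Rightarrow> ((nat \<Rightarrow> 'a::comm_ring_1) \<Rightarrow> (nat \<Rightarrow> 'a) \<Rightarrow> 'a)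
                    \<Rightarrow> (nat \<Rightarrow> 'a) \<Rightarrow> (nat \<Rightarrow> 'a) \<Rightarrow> 'a" where
  "alt m n f x y =
     (\<Sum>p\<in>{p. p permutes {..<m}}. \<Sum>q\<in>{q. q permutes {..<n}}.
        of_int (sign p * sign q) * f (x \<circ> p) (y \<circ> q))"

end

theory Submission
  imports Defs "HOL-Library.Disjoint_Sets"
begin

(* Write t = y_n and a_r = lam_r - r.  Removing the variable t from the
   supersymmetric h's gives h_c(x,y_1..y_{n-1}) = sum_{i>=0} t^i h_{c-i}(x,y_1..y_n).
   Column operations with a unitriangular matrix turn the Jacobi-Trudi matrix of
   SP_lam(x,y_1..y_{n-1}) into one whose only column in the old variables is the first;
   expanding along that column yields
      SP_lam(x,y_1..y_{n-1}) = SP_lam(x,y_1..y_n) + sum_{1<=i<n} t^i E_i(x,y_1..y_n),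
   where E_i is the Laplace expansion with the first column shifted by i (the bound
   lam_1 < n kills the terms with i >= n).  Each E_i is symmetric in y, and
   t^i y^{rho_n} is invariant under swapping y_{n-i} and y_n, so the alternation of
   every extra term vanishes. *)

text \<open>A signed sum over permutations of a function invariant under a transposition vanishes.
  The pairing q with q composed with the transposition works in every characteristic.\<close>
lemma signed_permutation_sum_eq_0:
  fixes G :: "(nat \<Rightarrow> 'a) \<Rightarrow> 'b::comm_ring_1"
  assumes S: "finite S" "a \<in> S" "b \<in> S" "a \<noteq> b"
    and inv: "\<And>z. G (z \<circ> transpose a b) = G z"
  shows "(\<Sum>q\<in>{q. q permutes S}. of_int (sign q) * G (y \<circ> q)) = 0"
proof (rule sum_involution_eq_0[where h = "\<lambda>q. q \<circ> transpose a b"])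
  have t: "transpose a b permutes S"
    using S by (simp add: permutes_swap_id)
  fix q assume "q \<in> {q. q permutes S}"
  then have q: "q permutes S" by simp
  have "permutation q" "permutation (transpose a b)"
    using q t S(1) by (auto simp: permutation_permutes)
  then have "sign (q \<circ> transpose a b) = - sign q"
    using S(4) by (simp add: sign_compose sign_swap_id)
  moreover have "G (y \<circ> (q \<circ> transpose a b)) = G (y \<circ> q)"
    using inv[of "y \<circ> q"] by (simp add: comp_assoc)
  ultimately show "of_int (sign (q \<circ> transpose a b)) * G (y \<circ> (q \<circ> transpose a b))
                   + of_int (sign q) * G (y \<circ> q) = 0"
    by simp
  show "q \<circ> transpose a b \<in> {q. q permutes S}"
    using permutes_compose[OF t q] by simp
  show "q \<circ> transpose a b \<circ> transpose a b = q"
    by (simp add: fun_eq_iff)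
  have "q b \<noteq> q a"
    using S permutes_inj[OF q] by (auto dest: injD)
  then show "q \<circ> transpose a b \<noteq> q"
    by (metis comp_apply transpose_apply_first)
qed

lemma alt_eq_0_if_transposition_invariant:
  assumes ab: "a < n" "b < n" "a \<noteq> b"
    and inv: "\<And>x' z. f x' (z \<circ> transpose a b) = f x' z"
  shows "alt m n f x y = 0"
proof -
  have "(\<Sum>q\<in>{q. q permutes {..<n}}. of_int (sign q) * f x' (y \<circ> q)) = 0" for x'
    using ab inv by (intro signed_permutation_sum_eq_0[where G = "f x'"]) auto
  then show ?thesis
    unfolding alt_def by (simp add: mult.assoc flip: sum_distrib_left)
qed

lemma alt_add_sum:
  "alt m n (\<lambda>x y. f x y + (\<Sum>i\<in>I. g i x y)) x y = alt m n f x y + (\<Sum>i\<in>I. alt m n (g i) x y)"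
  unfolding alt_def
  by (simp add: distrib_left sum.distrib sum_distrib_left sum.swap[of _ I])

text \<open>h vanishes in negative degree; this truncates the t-expansions below.\<close>
lemma h_xy_neg: "a < 0 \<Longrightarrow> h_xy m x n y a = 0"
  by (simp add: h_xy_def)

text \<open>Adjoining the variable y_k multiplies the generating series by 1 - y_k t.\<close>
lemma h_xy_add_var: "h_xy m x (Suc k) y b = h_xy m x k y b - y k * h_xy m x k y (b - 1)"
proof (cases "b < 0")
  case True then show ?thesis by (simp add: h_xy_def)
next
  case False
  define F where "F = (\<Prod>i<m. geom_fps (x i)) * (\<Prod>j<k. 1 - fps_const (y j) * fps_X)"
  have "(\<Prod>i<m. geom_fps (x i)) * (\<Prod>j<Suc k. 1 - fps_const (y j) * fps_X)
        = F - fps_const (y k) * (F * fps_X)"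
    by (simp add: F_def algebra_simps)
  then have "h_xy m x (Suc k) y b = fps_nth (F - fps_const (y k) * (F * fps_X)) (nat b)"
    using False by (simp add: h_xy_def)
  also have "\<dots> = fps_nth F (nat b) - y k * (if nat b = 0 then 0 else fps_nth F (nat b - 1))"
    by simp
  also have "\<dots> = h_xy m x k y b - y k * h_xy m x k y (b - 1)"
    using False by (auto simp: h_xy_def F_def nat_diff_distrib')
  finally show ?thesis .
qed

text \<open>Iterating the recurrence upwards: the entry of the column operations below.\<close>
lemma h_xy_expand_up:
  "h_xy m x k y (a + int s) = y k ^ s * h_xy m x k y a
     + (\<Sum>j\<in>{1..s}. y k ^ (s - j) * h_xy m x (Suc k) y (a + int j))"
proof (induction s)
  case 0 then show ?case by simp
next
  case (Suc s)
  have step: "h_xy m x k y (a + int (Suc s))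
      = h_xy m x (Suc k) y (a + int (Suc s)) + y k * h_xy m x k y (a + int s)"
    using h_xy_add_var[of m x k y "a + int (Suc s)"] by simp
  have "(\<Sum>j\<in>{1..Suc s}. y k ^ (Suc s - j) * h_xy m x (Suc k) y (a + int j))
     = h_xy m x (Suc k) y (a + int (Suc s))
       + y k * (\<Sum>j\<in>{1..s}. y k ^ (s - j) * h_xy m x (Suc k) y (a + int j))"
    by (simp add: sum_distrib_left Suc_diff_le mult.assoc)
  then show ?case
    unfolding step Suc by (simp add: algebra_simps)
qed

text \<open>Iterating the recurrence downwards: h_c in k variables as a t-expansion in k+1.\<close>
lemma h_xy_expand_down:
  "h_xy m x k y c = (\<Sum>i<s. y k ^ i * h_xy m x (Suc k) y (c - int i))
     + y k ^ s * h_xy m x k y (c - int s)"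
proof (induction s)
  case 0 then show ?case by simp
next
  case (Suc s)
  have "h_xy m x k y (c - int s)
      = h_xy m x (Suc k) y (c - int s) + y k * h_xy m x k y (c - int (Suc s))"
    using h_xy_add_var[of m x k y "c - int s"] by (simp add: algebra_simps)
  then show ?case
    using Suc by (simp add: algebra_simps)
qed

lemma h_xy_permute: "q permutes {..<n} \<Longrightarrow> h_xy m x n (y \<circ> q) a = h_xy m x n y a"
  unfolding h_xy_def
  using prod.permute[of q "{..<n}" "\<lambda>j. 1 - fps_const (y j) * fps_X"]
  by (simp add: comp_def)

definition SP_mat :: "nat list \<Rightarrow> nat \<Rightarrow> (nat \<Rightarrow> 'a::comm_ring_1) \<Rightarrow> nat \<Rightarrow> (nat \<Rightarrow> 'a) \<Rightarrow> 'a mat" where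
  "SP_mat lam m x n y = mat (length lam) (length lam)
       (\<lambda>(r, s). h_xy m x n y (int (lam ! r) - int r + int s))"

text \<open>The Jacobi-Trudi matrix in k y-variables after column operations: only the first
  column still uses k variables, the others use k+1.\<close>
definition mixed_mat :: "nat list \<Rightarrow> nat \<Rightarrow> (nat \<Rightarrow> 'a::comm_ring_1) \<Rightarrow> nat \<Rightarrow> (nat \<Rightarrow> 'a) \<Rightarrow> 'a mat" where
  "mixed_mat lam m x k y = mat (length lam) (length lam)
       (\<lambda>(r, s). if s = 0 then h_xy m x k y (int (lam ! r) - int r)
                 else h_xy m x (Suc k) y (int (lam ! r) - int r + int s))"

text \<open>The unitriangular matrix realising the column operations.\<close>
definition unitri_mat :: "nat \<Rightarrow> 'a::comm_ring_1 \<Rightarrow> 'a mat" where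
  "unitri_mat l t = mat l l (\<lambda>(j, s). if j \<le> s then t ^ (s - j) else 0)"

text \<open>Laplace expansion along the first column of SP_mat with that column shifted by i;
  for i = 0 it is SP itself.\<close>
definition SP_shift :: "nat list \<Rightarrow> nat \<Rightarrow> (nat \<Rightarrow> 'a::comm_ring_1) \<Rightarrow> nat \<Rightarrow> (nat \<Rightarrow> 'a) \<Rightarrow> nat \<Rightarrow> 'a" where
  "SP_shift lam m x n y i = (\<Sum>r<length lam. h_xy m x n y (int (lam ! r) - int r - int i)
        * cofactor (SP_mat lam m x n y) r 0)"

lemma SP_SP_mat: "SP lam m x n y = det (SP_mat lam m x n y)"
  by (simp add: SP_def SP_mat_def)

lemma SP_shift_0: "lam \<noteq> [] \<Longrightarrow> SP_shift lam m x n y 0 = SP lam m x n y"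
  unfolding SP_SP_mat SP_shift_def
  by (subst laplace_expansion_column[of _ "length lam" 0]) (auto simp: SP_mat_def)

lemma SP_shift_permute:
  "q permutes {..<n} \<Longrightarrow> SP_shift lam m x n (y \<circ> q) i = SP_shift lam m x n y i"
  unfolding SP_shift_def SP_mat_def by (simp add: h_xy_permute)

lemma det_unitri_mat: "det (unitri_mat l t) = 1"
proof -
  have U: "unitri_mat l t \<in> carrier_mat l l"
    by (simp add: unitri_mat_def)
  have "upper_triangular (unitri_mat l t)"
    by (auto simp: upper_triangular_def unitri_mat_def)
  then have "det (unitri_mat l t) = prod_list (diag_mat (unitri_mat l t))"
    using det_upper_triangular U by blast
  also have "diag_mat (unitri_mat l t) = map (\<lambda>i. 1) [0..<l]"
    by (auto simp: diag_mat_def unitri_mat_def)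
  finally show ?thesis
    by (simp add: map_replicate_const)
qed

lemma SP_mat_factor:
  "SP_mat lam m x k y = mixed_mat lam m x k y * unitri_mat (length lam) (y k)"
proof (rule eq_matI)
  let ?l = "length lam" and ?t = "y k"
  let ?A = "mixed_mat lam m x k y" and ?U = "unitri_mat ?l ?t"
  fix r s assume "r < dim_row (?A * ?U)" and "s < dim_col (?A * ?U)"
  then have r: "r < ?l" and s: "s < ?l"
    by (simp_all add: mixed_mat_def unitri_mat_def)
  let ?a = "int (lam ! r) - int r"
  let ?g = "\<lambda>j. (if j = 0 then h_xy m x k y ?a else h_xy m x (Suc k) y (?a + int j)) * ?t ^ (s - j)"
  have "(?A * ?U) $$ (r, s) = (\<Sum>j<?l. if j \<le> s then ?g j else 0)"
    using r s by (auto simp: scalar_prod_def lessThan_atLeast0 mixed_mat_def unitri_mat_def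
                       intro!: sum.cong)
  also have "\<dots> = sum ?g {j\<in>{..<?l}. j \<le> s}"
    by (rule sum.inter_filter[symmetric]) simp
  also have "{j\<in>{..<?l}. j \<le> s} = {0..s}"
    using s by auto
  also have "sum ?g {0..s} = ?g 0 + (\<Sum>j\<in>{1..s}. ?g j)"
    by (simp add: sum.atLeast_Suc_atMost)
  also have "\<dots> = h_xy m x k y (?a + int s)"
    by (simp add: h_xy_expand_up[of m x k y ?a s] mult.commute)
  finally show "SP_mat lam m x k y $$ (r, s) = (?A * ?U) $$ (r, s)"
    using r s by (simp add: SP_mat_def)
qed (simp_all add: SP_mat_def mixed_mat_def unitri_mat_def)

lemma SP_eq_det_mixed_mat: "SP lam m x k y = det (mixed_mat lam m x k y)"
proof -
  have A: "mixed_mat lam m x k y \<in> carrier_mat (length lam) (length lam)"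
    and U: "unitri_mat (length lam) (y k) \<in> carrier_mat (length lam) (length lam)"
    by (simp_all add: mixed_mat_def unitri_mat_def)
  show ?thesis
    by (simp add: SP_SP_mat SP_mat_factor det_mult[OF A U] det_unitri_mat)
qed

text \<open>Expanding the mixed matrix along its first column, with the downward t-expansion of
  its entries, which stops after k+1 terms since all parts are at most k.\<close>
lemma SP_expand_last_var:
  assumes ne: "lam \<noteq> []" and bnd: "\<forall>v\<in>set lam. v < Suc k"
  shows "SP lam m x k y = (\<Sum>i<Suc k. y k ^ i * SP_shift lam m x (Suc k) y i)"
proof -
  let ?l = "length lam"
  let ?A = "mixed_mat lam m x k y" and ?M = "SP_mat lam m x (Suc k) y"
  let ?a = "\<lambda>r. int (lam ! r) - int r"
  have cof: "cofactor ?A r 0 = cofactor ?M r 0" for r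
    unfolding cofactor_def mat_delete_def
    by (rule arg_cong[where f = "\<lambda>B. _ * det B"], rule eq_matI)
       (auto simp: mixed_mat_def SP_mat_def)
  have col0: "?A $$ (r, 0) = (\<Sum>i<Suc k. y k ^ i * h_xy m x (Suc k) y (?a r - int i))"
    if r: "r < ?l" for r
  proof -
    have "lam ! r < Suc k" using bnd r by auto
    then have "h_xy m x k y (?a r - int (Suc k)) = 0"
      by (intro h_xy_neg) simp
    moreover have "?A $$ (r, 0) = h_xy m x k y (?a r)"
      using r unfolding mixed_mat_def by (subst index_mat(1)) auto
    ultimately show ?thesis
      using h_xy_expand_down[of m x k y "?a r" "Suc k"] by simp
  qed
  have A: "?A \<in> carrier_mat ?l ?l"
    by (simp add: mixed_mat_def)
  have "SP lam m x k y = (\<Sum>r<?l. ?A $$ (r, 0) * cofactor ?A r 0)"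
    using laplace_expansion_column[OF A] ne by (simp add: SP_eq_det_mixed_mat)
  also have "\<dots> = (\<Sum>r<?l. (\<Sum>i<Suc k. y k ^ i * h_xy m x (Suc k) y (?a r - int i)) * cofactor ?M r 0)"
    by (simp add: col0 cof)
  also have "\<dots> = (\<Sum>i<Suc k. y k ^ i * SP_shift lam m x (Suc k) y i)"
    unfolding SP_shift_def sum_distrib_left sum_distrib_right
    by (subst sum.swap) (simp add: mult.assoc)
  finally show ?thesis .
qed

lemma SP_remove_last_var:
  assumes bnd: "\<forall>v\<in>set lam. v < Suc k"
  shows "SP lam m x k y = SP lam m x (Suc k) y
           + (\<Sum>i<k. y k ^ Suc i * SP_shift lam m x (Suc k) y (Suc i))"
proof (cases "lam = []")
  case True
  then show ?thesis by (simp add: SP_def SP_shift_def)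
next
  case False
  then show ?thesis
    unfolding SP_expand_last_var[OF False bnd] sum.lessThan_Suc_shift
    by (simp add: SP_shift_0[OF False])
qed

text \<open>Swapping z_{b-e} and z_b (0 < e <= b) fixes z_b^e z^{rho_{b+1}}: the swap exchanges
  the exponents e and 0 of these two variables.\<close>
lemma rho_mon_transpose:
  fixes z :: "nat \<Rightarrow> 'a::comm_ring_1"
  assumes e: "0 < e" "e \<le> b"
  defines "t \<equiv> transpose (b - e) b"
  shows "(z \<circ> t) b ^ e * rho_mon (Suc b) (z \<circ> t) = z b ^ e * rho_mon (Suc b) z"
proof -
  have tp: "t permutes {..<Suc b}"
    unfolding t_def by (rule permutes_swap_id) auto
  have single: "z c ^ e = (\<Prod>j<Suc b. z j ^ (if j = c then e else 0))" if "c < Suc b" for c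
  proof -
    have "(\<Prod>j<Suc b. z j ^ (if j = c then e else 0)) = (\<Prod>j<Suc b. if j = c then z j ^ e else 1)"
      by (rule prod.cong) auto
    then show ?thesis using that by simp
  qed
  have "(z \<circ> t) b ^ e * rho_mon (Suc b) (z \<circ> t) = z (b - e) ^ e * (\<Prod>j<Suc b. z (t j) ^ (b - j))"
    by (simp add: t_def rho_mon_def)
  also have "(\<Prod>j<Suc b. z (t j) ^ (b - j)) = (\<Prod>j<Suc b. z j ^ (b - t j))"
    using prod.permute[OF tp, of "\<lambda>j. z j ^ (b - t j)"] t_def by (simp add: comp_def)
  also have "z (b - e) ^ e * \<dots> = (\<Prod>j<Suc b. z j ^ ((if j = b - e then e else 0) + (b - t j)))"
    unfolding single[of "b - e", OF diff_less_Suc]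
    by (simp only: prod.distrib[symmetric] power_add[symmetric])
  also have "\<dots> = (\<Prod>j<Suc b. z j ^ ((if j = b then e else 0) + (b - j)))"
    using e by (intro prod.cong) (auto simp: t_def transpose_def)
  also have "\<dots> = z b ^ e * rho_mon (Suc b) z"
    unfolding single[of b, OF lessI] rho_mon_def diff_Suc_1
    by (simp only: prod.distrib[symmetric] power_add[symmetric])
  finally show ?thesis .
qed

theorem lemma2p3:
  fixes m n :: nat and lam :: "nat list" and x y :: "nat \<Rightarrow> 'a::comm_ring_1"
  assumes "n \<ge> 1" and "is_partition lam" and "\<forall>k\<in>set lam. k < n"
  shows "alt m n (\<lambda>x' y'. SP lam m x' n y' * rho_mon m x' * rho_mon n y') x y
       = alt m n (\<lambda>x' y'. SP lam m x' (n - 1) y' * rho_mon m x' * rho_mon n y') x y"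
proof -
  obtain k where n: "n = Suc k" using assms(1) by (cases n) auto
  define G where "G i x' y' = SP_shift lam m x' n y' (Suc i) * rho_mon m x' * (y' k ^ Suc i * rho_mon n y')"
    for i and x' y' :: "nat \<Rightarrow> 'a"
  have "SP lam m x' (n - 1) y' = SP lam m x' n y'
          + (\<Sum>i<k. y' k ^ Suc i * SP_shift lam m x' n y' (Suc i))" for x' y' :: "nat \<Rightarrow> 'a"
    using SP_remove_last_var[of lam k] assms(3) n by simp
  then have split: "(\<lambda>x' y'. SP lam m x' (n - 1) y' * rho_mon m x' * rho_mon n y')
      = (\<lambda>x' y'. SP lam m x' n y' * rho_mon m x' * rho_mon n y' + (\<Sum>i<k. G i x' y'))"
    by (simp add: G_def algebra_simps sum_distrib_left sum_distrib_right)
  have "alt m n (G i) x y = 0" if i: "i < k" for i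
  proof (rule alt_eq_0_if_transposition_invariant)
    let ?t = "transpose (k - Suc i) k"
    have "?t permutes {..<n}"
      using n by (intro permutes_swap_id) auto
    then show "G i x' (z \<circ> ?t) = G i x' z" for x' z
      using rho_mon_transpose[of "Suc i" k z] i
      by (simp add: G_def n SP_shift_permute)
  qed (use i n in auto)
  then show ?thesis
    unfolding split alt_add_sum by simp
qed

end
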